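(* Let $X$ be a $T_0$-space. If $X$ is $S^{\ast}$-well-filtered, then $X$ is weak well-filtered. If moreover $X$ is coherent, then $X$ is $S^{\ast}$-well-filtered if and only if $X$ is weak well-filtered. In particular, every weak well-filtered KC space is $S^{\ast}$-well-filtered.
   Context: All spaces are $T_0$. The specialization order of $X$ is given by $x\le y$ iff $x\in cl(\{y\})$; ${\uparrow}$ is taken with respect to it; a subset is saturated if it is an upper set in the specialization order. $K(X)$ denotes the set of all nonempty compact saturated subsets of $X$; a family in $K(X)$ is filtered if any two members contain a common member. $X$ is weak well-filtered if for every filtered family $\{K_i\mid i\in I\}\subseteq K(X)$ and every nonempty open $U$, $\bigcap_{i\in I}K_i\subseteq U$ implies $K_i\subseteq U$ for some $i$. $X$ is $S^{\ast}$-well-filtered if for every filtered family $\{K_i\mid i\in I\}\subseteq K(X)$, every $G\in K(X)$ and every nonempty open $U$, $\bigcap_{i\in I}K_i\cap G\subseteq U$ implies $K_i\cap G\subseteq U$ for some $i$. $X$ is coherent if the intersection of any two compact saturated subsets is compact. $X$ is KC if every compact subset of $X$ is closed. *)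

theory Defs
  imports "HOL-Analysis.Analysis"
begin

definition spec_le :: "'a topology \<Rightarrow> 'a \<Rightarrow> 'a \<Rightarrow> bool" where
  "spec_le X x y \<longleftrightarrow> x \<in> X closure_of {y}"

definition upset :: "'a topology \<Rightarrow> 'a set \<Rightarrow> 'a set" where
  "upset X A = {y \<in> topspace X. \<exists>x\<in>A. spec_le X x y}"

definition saturatedin :: "'a topology \<Rightarrow> 'a set \<Rightarrow> bool" where
  "saturatedin X A \<longleftrightarrow> A \<subseteq> topspace X \<and> upset X A = A"

definition KX :: "'a topology \<Rightarrow> 'a set set" where
  "KX X = {K. K \<noteq> {} \<and> compactin X K \<and> saturatedin X K}"

definition filtered_family :: "'a set set \<Rightarrow> bool" where
  "filtered_family \<K> \<longleftrightarrow> \<K> \<noteq> {} \<and> (\<forall>K1\<in>\<K>. \<forall>K2\<in>\<K>. \<exists>K3\<in>\<K>. K3 \<subseteq> K1 \<and> K3 \<subseteq> K2)"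

definition weak_well_filtered :: "'a topology \<Rightarrow> bool" where
  "weak_well_filtered X \<longleftrightarrow>
     (\<forall>\<K> U. \<K> \<subseteq> KX X \<and> filtered_family \<K> \<and> openin X U \<and> U \<noteq> {} \<and> \<Inter>\<K> \<subseteq> U
        \<longrightarrow> (\<exists>K\<in>\<K>. K \<subseteq> U))"

definition S_star_well_filtered :: "'a topology \<Rightarrow> bool" where
  "S_star_well_filtered X \<longleftrightarrow>
     (\<forall>\<K> G U. \<K> \<subseteq> KX X \<and> filtered_family \<K> \<and> G \<in> KX X \<and> openin X U \<and> U \<noteq> {}
        \<and> \<Inter>\<K> \<inter> G \<subseteq> U \<longrightarrow> (\<exists>K\<in>\<K>. K \<inter> G \<subseteq> U))"

definition coherent_space :: "'a topology \<Rightarrow> bool" where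
  "coherent_space X \<longleftrightarrow>
     (\<forall>A B. compactin X A \<and> saturatedin X A \<and> compactin X B \<and> saturatedin X B
        \<longrightarrow> compactin X (A \<inter> B))"

definition KC_space :: "'a topology \<Rightarrow> bool" where
  "KC_space X \<longleftrightarrow> (\<forall>K. compactin X K \<longrightarrow> closedin X K)"

end

theory Submission
  imports Defs
begin

text \<open>Taking \<open>G\<close> to be a member of the family itself shows that \<open>S\<^sup>*\<close>-well-filteredness
  implies weak well-filteredness. Conversely, given a filtered family \<open>\<K>\<close> and \<open>G \<in> K(X)\<close>,
  either some \<open>K \<inter> G\<close> is empty, or the sets \<open>K \<inter> G\<close> form a filtered family of nonempty
  saturated sets with intersection \<open>\<Inter>\<K> \<inter> G\<close>; they are compact whenever compact saturated
  sets have compact intersections, which holds in coherent spaces and in KC spaces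
  (a compact set meets a closed one in a compact set), and weak well-filteredness applies.\<close>

lemma saturatedin_Int:
  assumes "saturatedin X A" "saturatedin X B"
  shows "saturatedin X (A \<inter> B)"
proof -
  have sub: "A \<inter> B \<subseteq> topspace X"
    using assms unfolding saturatedin_def by blast
  have "upset X (A \<inter> B) \<subseteq> upset X A \<inter> upset X B"
    unfolding upset_def by blast
  moreover have "A \<inter> B \<subseteq> upset X (A \<inter> B)"
  proof
    fix x assume x: "x \<in> A \<inter> B"
    with sub have "spec_le X x x"
      unfolding spec_le_def using closure_of_subset[of "{x}" X] by blast
    with x sub show "x \<in> upset X (A \<inter> B)"
      unfolding upset_def by blast
  qed
  ultimately show ?thesis
    using assms sub unfolding saturatedin_def by blast
qed

lemma Int_in_KX:
  assumes "A \<in> KX X" "B \<in> KX X" "compactin X (A \<inter> B)" "A \<inter> B \<noteq> {}"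
  shows "A \<inter> B \<in> KX X"
  using assms saturatedin_Int[of X A B] unfolding KX_def by simp

lemma filtered_family_image_Int:
  assumes "filtered_family \<K>"
  shows "filtered_family ((\<lambda>K. K \<inter> G) ` \<K>)"
  unfolding filtered_family_def
proof (intro conjI ballI)
  show "(\<lambda>K. K \<inter> G) ` \<K> \<noteq> {}"
    using assms unfolding filtered_family_def by simp
next
  fix L1 L2 assume "L1 \<in> (\<lambda>K. K \<inter> G) ` \<K>" "L2 \<in> (\<lambda>K. K \<inter> G) ` \<K>"
  then obtain K1 K2 where "K1 \<in> \<K>" "K2 \<in> \<K>" "L1 = K1 \<inter> G" "L2 = K2 \<inter> G"
    by blast
  moreover obtain K3 where "K3 \<in> \<K>" "K3 \<subseteq> K1" "K3 \<subseteq> K2"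
    using assms \<open>K1 \<in> \<K>\<close> \<open>K2 \<in> \<K>\<close> unfolding filtered_family_def by meson
  ultimately show "\<exists>L3\<in>(\<lambda>K. K \<inter> G) ` \<K>. L3 \<subseteq> L1 \<and> L3 \<subseteq> L2"
    by (intro bexI[of _ "K3 \<inter> G"]) auto
qed

lemma S_star_well_filtered_imp_weak_well_filtered:
  assumes "S_star_well_filtered X"
  shows "weak_well_filtered X"
  unfolding weak_well_filtered_def
proof (intro allI impI, elim conjE)
  fix \<K> U
  assume \<K>: "\<K> \<subseteq> KX X" "filtered_family \<K>" and U: "openin X U" "U \<noteq> {}" "\<Inter>\<K> \<subseteq> U"
  then obtain K0 where K0: "K0 \<in> \<K>"
    unfolding filtered_family_def by blast
  then have "\<Inter>\<K> \<inter> K0 \<subseteq> U" "K0 \<in> KX X"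
    using \<K> U by blast+
  then obtain K where K: "K \<in> \<K>" "K \<inter> K0 \<subseteq> U"
    using assms \<K> U unfolding S_star_well_filtered_def by blast
  moreover obtain K3 where "K3 \<in> \<K>" "K3 \<subseteq> K" "K3 \<subseteq> K0"
    using \<K>(2) K0 K(1) unfolding filtered_family_def by blast
  ultimately show "\<exists>K\<in>\<K>. K \<subseteq> U"
    by blast
qed

lemma weak_well_filtered_imp_S_star_well_filtered:
  assumes compact_Int: "\<And>A B. A \<in> KX X \<Longrightarrow> B \<in> KX X \<Longrightarrow> compactin X (A \<inter> B)"
    and "weak_well_filtered X"
  shows "S_star_well_filtered X"
  unfolding S_star_well_filtered_def
proof (intro allI impI, elim conjE)
  fix \<K> G U
  assume \<K>: "\<K> \<subseteq> KX X" "filtered_family \<K>" and G: "G \<in> KX X"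
    and U: "openin X U" "U \<noteq> {}" "\<Inter>\<K> \<inter> G \<subseteq> U"
  show "\<exists>K\<in>\<K>. K \<inter> G \<subseteq> U"
  proof (cases "\<exists>K\<in>\<K>. K \<inter> G = {}")
    case True
    then show ?thesis by blast
  next
    case False
    define \<L> where "\<L> = (\<lambda>K. K \<inter> G) ` \<K>"
    have "\<L> \<subseteq> KX X"
    proof
      fix L assume "L \<in> \<L>"
      then obtain K where K: "K \<in> \<K>" "L = K \<inter> G"
        unfolding \<L>_def by blast
      then have "K \<in> KX X" "K \<inter> G \<noteq> {}"
        using \<K>(1) False by auto
      then show "L \<in> KX X"
        unfolding K(2) using G compact_Int by (intro Int_in_KX)
    qed
    moreover have "filtered_family \<L>"
      unfolding \<L>_def using \<K>(2) by (rule filtered_family_image_Int)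
    moreover have "\<Inter>\<L> = \<Inter>\<K> \<inter> G"
      using \<K>(2) unfolding \<L>_def filtered_family_def by auto
    ultimately obtain L where "L \<in> \<L>" "L \<subseteq> U"
      using assms(2) U unfolding weak_well_filtered_def by (metis order_refl)
    then show ?thesis
      unfolding \<L>_def by blast
  qed
qed

lemma coherent_space_compactin_Int:
  assumes "coherent_space X" "A \<in> KX X" "B \<in> KX X"
  shows "compactin X (A \<inter> B)"
  using assms unfolding coherent_space_def KX_def by blast

lemma KC_space_compactin_Int:
  assumes "KC_space X" "compactin X A" "compactin X B"
  shows "compactin X (A \<inter> B)"
  using assms closed_Int_compactin unfolding KC_space_def by blast

theorem mainTheorem7:
  fixes X :: "'a topology"
  assumes "t0_space X"
  shows "(S_star_well_filtered X \<longrightarrow> weak_well_filtered X)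
    \<and> (coherent_space X \<longrightarrow> (S_star_well_filtered X \<longleftrightarrow> weak_well_filtered X))
    \<and> (weak_well_filtered X \<and> KC_space X \<longrightarrow> S_star_well_filtered X)"
  using S_star_well_filtered_imp_weak_well_filtered
    weak_well_filtered_imp_S_star_well_filtered[OF coherent_space_compactin_Int]
    weak_well_filtered_imp_S_star_well_filtered[OF KC_space_compactin_Int]
  by (auto simp: KX_def)

end
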